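(* Let $s,t,D\ge1$ be integers and let $\mathcal G=\{G_1,\dots,G_t\}$ be an $s$-joined graph family on vertex set $V$; write $U=V\times[t]$. Suppose $Y_0\subseteq V$ satisfies $|Y_0|\ge3sD+4s$. Then there exists $U_0\subseteq U$ with $|U_0|\le s$ such that every $X\subseteq U\setminus U_0$ with $|X|\le2s$ satisfies $|N^*(X,Y_0\setminus U_0|_V)|\ge D|X|$.
   Context: A graph family $\mathcal G=\{G_1,\dots,G_t\}$ is a collection of $t$ simple graphs on a common finite vertex set $V$. For $X\subseteq V\times[t]$, $\Gamma_{\mathcal G}(X)=\bigcup_{(v,i)\in X}\{u\in V:uv\in E(G_i)\}$. The family is $s$-joined if for all $X\subseteq V\times[t]$ and $Y\subseteq V$ with $|X|\ge s$ and $|Y|\ge s$ there exist $(v,i)\in X$ and $y\in Y$ with $vy\in E(G_i)$. For $X\subseteq V\times[t]$, $X|_V=\{v\in V:(v,i)\in X\text{ for some }i\}$, and for $Y\subseteq V$, $N^*(X,Y)=(\Gamma_{\mathcal G}(X)\cap Y)\setminus X|_V$. *)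

theory Defs
  imports Main
begin

definition graph_family :: "'a set \<Rightarrow> nat \<Rightarrow> (nat \<Rightarrow> 'a \<Rightarrow> 'a \<Rightarrow> bool) \<Rightarrow> bool" where
  "graph_family V t E \<longleftrightarrow> finite V \<and>
     (\<forall>i\<in>{1..t}. (\<forall>u v. E i u v \<longrightarrow> E i v u) \<and> (\<forall>u. \<not> E i u u)
                  \<and> (\<forall>u v. E i u v \<longrightarrow> u \<in> V \<and> v \<in> V))"

definition Gamma :: "'a set \<Rightarrow> (nat \<Rightarrow> 'a \<Rightarrow> 'a \<Rightarrow> bool) \<Rightarrow> ('a \<times> nat) set \<Rightarrow> 'a set" where
  "Gamma V E X = {u \<in> V. \<exists>(v,i)\<in>X. E i u v}"

definition s_joined :: "'a set \<Rightarrow> nat \<Rightarrow> (nat \<Rightarrow> 'a \<Rightarrow> 'a \<Rightarrow> bool) \<Rightarrow> nat \<Rightarrow> bool" where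
  "s_joined V t E s \<longleftrightarrow>
     (\<forall>X Y. X \<subseteq> V \<times> {1..t} \<and> Y \<subseteq> V \<and> card X \<ge> s \<and> card Y \<ge> s \<longrightarrow>
        (\<exists>(v,i)\<in>X. \<exists>y\<in>Y. E i v y))"

definition restrV :: "('a \<times> nat) set \<Rightarrow> 'a set" where
  "restrV X = fst ` X"

definition Nstar :: "'a set \<Rightarrow> (nat \<Rightarrow> 'a \<Rightarrow> 'a \<Rightarrow> bool) \<Rightarrow> ('a \<times> nat) set \<Rightarrow> 'a set \<Rightarrow> 'a set" where
  "Nstar V E X Y = (Gamma V E X \<inter> Y) - restrV X"

end

theory Submission
  imports Defs
begin

text \<open>Choose a largest set U0 of fewer than s pairs that fails to expand, i.e. with
  |N*(U0,Y0)| \<le> D|U0|. If some X disjoint from U0 with |X| \<le> 2s failed to expand into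
  Y0 minus U0|_V, then X \<union> U0 would fail to expand into Y0. By maximality |X \<union> U0| \<ge> s;
  but then s-joinedness forces all but fewer than s vertices of Y0 to be neighbours of
  X \<union> U0, and since |X \<union> U0| < 3s this gives more than D|X \<union> U0| new neighbours.\<close>

lemma Nstar_subset: "Nstar V E X Y \<subseteq> V"
  unfolding Nstar_def Gamma_def by auto

lemma Nstar_Un_subset:
  "Nstar V E (X \<union> W) Y \<subseteq> Nstar V E X (Y - restrV W) \<union> Nstar V E W Y"
  unfolding Nstar_def Gamma_def restrV_def by auto

lemma card_Nstar_Un_less:
  assumes "finite V" "finite X" "finite W" "X \<inter> W = {}"
    and X: "card (Nstar V E X (Y - restrV W)) < D * card X"
    and W: "card (Nstar V E W Y) \<le> D * card W"
  shows "card (Nstar V E (X \<union> W) Y) < D * card (X \<union> W)"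
proof -
  have "card (Nstar V E (X \<union> W) Y)
        \<le> card (Nstar V E X (Y - restrV W) \<union> Nstar V E W Y)"
    using \<open>finite V\<close> Nstar_subset[of V E]
    by (intro card_mono[OF _ Nstar_Un_subset]) (auto intro: finite_subset)
  also have "\<dots> \<le> card (Nstar V E X (Y - restrV W)) + card (Nstar V E W Y)"
    by (rule card_Un_le)
  also have "\<dots> < D * card X + D * card W"
    using X W by linarith
  also have "\<dots> = D * card (X \<union> W)"
    using assms(2-4) by (simp add: card_Un_disjoint distrib_left)
  finally show ?thesis .
qed

lemma card_diff_Gamma_less:
  assumes gf: "graph_family V t E" and sj: "s_joined V t E s"
    and W: "W \<subseteq> V \<times> {1..t}" "s \<le> card W" and Y: "Y \<subseteq> V"
  shows "card (Y - Gamma V E W) < s"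
proof (rule ccontr)
  assume "\<not> card (Y - Gamma V E W) < s"
  moreover have "Y - Gamma V E W \<subseteq> V" using Y by blast
  ultimately have "\<exists>(v, i)\<in>W. \<exists>y\<in>Y - Gamma V E W. E i v y"
    using sj W unfolding s_joined_def by simp
  then obtain v i y where vi: "(v, i) \<in> W" and y: "y \<in> Y - Gamma V E W" and "E i v y"
    by blast
  moreover have "i \<in> {1..t}" using vi W by auto
  ultimately have "E i y v" using gf unfolding graph_family_def by blast
  then have "y \<in> Gamma V E W" using y Y vi unfolding Gamma_def by blast
  then show False using y by blast
qed

lemma card_less_card_Nstar_add:
  assumes gf: "graph_family V t E" and sj: "s_joined V t E s"
    and W: "W \<subseteq> V \<times> {1..t}" "s \<le> card W" and Y: "Y \<subseteq> V"
  shows "card Y < card (Nstar V E W Y) + s + card W"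
proof -
  have fV: "finite V" using gf unfolding graph_family_def by auto
  then have fW: "finite W" using W(1) by (auto intro: finite_subset)
  have "Y \<subseteq> Nstar V E W Y \<union> (Y - Gamma V E W) \<union> restrV W"
    unfolding Nstar_def by auto
  then have "card Y \<le> card (Nstar V E W Y \<union> (Y - Gamma V E W) \<union> restrV W)"
    using fV fW Y Nstar_subset[of V E W Y]
    by (intro card_mono) (auto intro: finite_subset simp: restrV_def)
  also have "\<dots> \<le> card (Nstar V E W Y) + card (Y - Gamma V E W) + card (restrV W)"
    using card_Un_le[of "Nstar V E W Y \<union> (Y - Gamma V E W)" "restrV W"]
      card_Un_le[of "Nstar V E W Y" "Y - Gamma V E W"] by linarith
  also have "\<dots> < card (Nstar V E W Y) + s + card W"
    using card_diff_Gamma_less[OF assms] card_image_le[OF fW, of fst]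
    unfolding restrV_def by linarith
  finally show ?thesis .
qed

lemma card_Nstar_ge_if_large:
  assumes gf: "graph_family V t E" and sj: "s_joined V t E s"
    and W: "W \<subseteq> V \<times> {1..t}" "s \<le> card W" "card W \<le> 3 * s"
    and Y: "Y \<subseteq> V" "3 * s * D + 4 * s \<le> card Y"
  shows "D * card W \<le> card (Nstar V E W Y)"
proof -
  have "D * card W \<le> 3 * s * D" using W(3) by (simp add: mult.commute)
  moreover have "card Y < card (Nstar V E W Y) + s + card W"
    using card_less_card_Nstar_add[OF gf sj W(1,2) Y(1)] .
  ultimately show ?thesis using W(3) Y(2) by linarith
qed

lemma card_Nstar_ge_outside_maximal_nonexpanding:
  assumes gf: "graph_family V t E" and sj: "s_joined V t E s"
    and Y: "Y \<subseteq> V" "3 * s * D + 4 * s \<le> card Y"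
    and U0: "U0 \<subseteq> V \<times> {1..t}" "card U0 < s" "card (Nstar V E U0 Y) \<le> D * card U0"
    and U0_max: "\<And>W. W \<subseteq> V \<times> {1..t} \<Longrightarrow> card W < s \<Longrightarrow>
                  card (Nstar V E W Y) \<le> D * card W \<Longrightarrow> card W \<le> card U0"
    and X: "X \<subseteq> V \<times> {1..t} - U0" "card X \<le> 2 * s"
  shows "D * card X \<le> card (Nstar V E X (Y - restrV U0))"
proof (rule ccontr)
  assume not_expanding: "\<not> ?thesis"
  have fV: "finite V" using gf unfolding graph_family_def by auto
  then have fX: "finite X" and fU0: "finite U0" using X(1) U0(1) by (auto intro: finite_subset)
  have disjoint: "X \<inter> U0 = {}" using X(1) by blast
  then have bad: "card (Nstar V E (X \<union> U0) Y) < D * card (X \<union> U0)"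
    using card_Nstar_Un_less[OF fV fX fU0] U0(3) not_expanding by simp
  have card_XU0: "card (X \<union> U0) = card X + card U0"
    using card_Un_disjoint[OF fX fU0] disjoint by simp
  have XU0: "X \<union> U0 \<subseteq> V \<times> {1..t}" using X(1) U0(1) by blast
  show False
  proof (cases "card (X \<union> U0) < s")
    case True
    then have "card X = 0" using U0_max[OF XU0] bad card_XU0 by simp
    then show False using not_expanding by simp
  next
    case False
    moreover have "card (X \<union> U0) \<le> 3 * s" using card_XU0 X(2) U0(2) by simp
    ultimately have "D * card (X \<union> U0) \<le> card (Nstar V E (X \<union> U0) Y)"
      using card_Nstar_ge_if_large[OF gf sj XU0 _ _ Y] by simp
    then show False using bad by simp
  qed
qed

theorem proposition3p1:
  fixes V :: "'a set" and E :: "nat \<Rightarrow> 'a \<Rightarrow> 'a \<Rightarrow> bool"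
    and s t D :: nat and Y0 :: "'a set"
  assumes "s \<ge> 1" and "t \<ge> 1" and "D \<ge> 1"
    and "graph_family V t E"
    and "s_joined V t E s"
    and "Y0 \<subseteq> V"
    and "card Y0 \<ge> 3 * s * D + 4 * s"
  shows "\<exists>U0 \<subseteq> V \<times> {1..t}. card U0 \<le> s \<and>
           (\<forall>X. X \<subseteq> (V \<times> {1..t}) - U0 \<and> card X \<le> 2 * s \<longrightarrow>
                card (Nstar V E X (Y0 - restrV U0)) \<ge> D * card X)"
proof -
  define nonexpanding where "nonexpanding W \<longleftrightarrow>
    W \<subseteq> V \<times> {1..t} \<and> card W < s \<and> card (Nstar V E W Y0) \<le> D * card W" for W
  have "nonexpanding {}" unfolding nonexpanding_def Nstar_def Gamma_def using assms(1) by simp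
  then obtain U0 where U0: "nonexpanding U0"
    and U0_max: "\<And>W. nonexpanding W \<Longrightarrow> card W \<le> card U0"
    using ex_has_greatest_nat[of nonexpanding "{}" card s] unfolding nonexpanding_def by blast
  then have "D * card X \<le> card (Nstar V E X (Y0 - restrV U0))"
    if "X \<subseteq> V \<times> {1..t} - U0" "card X \<le> 2 * s" for X
    using card_Nstar_ge_outside_maximal_nonexpanding[OF assms(4-7), of U0 X] that
    unfolding nonexpanding_def by blast
  moreover have "U0 \<subseteq> V \<times> {1..t}" "card U0 \<le> s" using U0 unfolding nonexpanding_def by auto
  ultimately show ?thesis by blast
qed

end
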